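(* Let $E$ be a congruence on $\overline{\boldsymbol{T}(X_1,\ldots,X_n)}$, $F$ a congruence on $\overline{\boldsymbol{T}(Y_1,\ldots,Y_m)}$, $V:=\boldsymbol{V}(E)$, $W:=\boldsymbol{V}(F)$, and let $\psi:\overline{\boldsymbol{T}(X_1,\ldots,X_n)}/E\to\overline{\boldsymbol{T}(Y_1,\ldots,Y_m)}/F$ be a $\boldsymbol{T}$-algebra homomorphism. For every $f\in\overline{\boldsymbol{T}(X_1,\ldots,X_n)}/E$: (1) $\sup\{f(x)\mid x\in V\}\ge\sup\{\psi(f)(y)\mid y\in W\}$; (2) $\inf\{f(x)\mid x\in V\}\le\inf\{\psi(f)(y)\mid y\in W\}$. Moreover, if $W$ is nonempty, $\psi$ is injective and $F=\boldsymbol{E}(W)$, then equality holds in both (1) and (2).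
   Context: $\boldsymbol{T}=\mathbb{R}\cup\{-\infty\}$ with $a\oplus b=\max\{a,b\}$, $a\odot b=a+b$. $\overline{\boldsymbol{T}[X_1,\ldots,X_n]}$ is the tropical polynomial semiring modulo identifying polynomials defining the same function $\boldsymbol{T}^n\to\boldsymbol{T}$; it is cancellative and $\overline{\boldsymbol{T}(X_1,\ldots,X_n)}$ is its semifield of fractions. Each element defines a function $\mathbb{R}^n\to\boldsymbol{T}$ (quotients evaluated as differences). $\boldsymbol{T}$-algebras are semirings with a semiring homomorphism from $\boldsymbol{T}$; homomorphisms are compatible semiring homomorphisms. A congruence is an equivalence relation compatible with both operations. $\boldsymbol{V}(E)=\{x\in\mathbb{R}^n\mid f(x)=g(x)\ \forall(f,g)\in E\}$; for $W\subset\mathbb{R}^m$, $\boldsymbol{E}(W)=\{(f,g)\mid f(y)=g(y)\ \forall y\in W\}$. An element of the quotient by $E$ (resp. $F$) is evaluated at points of $\boldsymbol{V}(E)$ (resp. $\boldsymbol{V}(F)$) via any representative; suprema and infima are taken in $\boldsymbol{T}\cup\{+\infty\}$. *)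

theory Defs
  imports "HOL-Analysis.Analysis"
begin

text \<open>Tropical semifield T = real \<union> {-\<infinity>}, modelled inside ereal (values never +\<infinity>). A tropical polynomial is identified with the
  function it defines; a tropical monomial with coefficient c and exponent a is
  x \<mapsto> c + \<Sum> a_i x_i; the polynomial is the max over finitely many monomials
  (empty max = -\<infinity>, the zero polynomial).\<close>

definition trop_poly :: "(real^'n \<Rightarrow> ereal) set" where
  "trop_poly = {p. \<exists>S::(real \<times> ('n \<Rightarrow> nat)) set. finite S \<and>
      p = (\<lambda>x. SUP ca\<in>S. ereal (fst ca + (\<Sum>i\<in>UNIV. real (snd ca i) * x $ i)))}"

text \<open>Semifield of fractions: quotients p/q with q nonzero, evaluated as differences.\<close>
definition trop_rat :: "(real^'n \<Rightarrow> ereal) set" where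
  "trop_rat = {f. \<exists>p q. p \<in> trop_poly \<and> q \<in> trop_poly \<and> q \<noteq> (\<lambda>x. -\<infinity>) \<and>
      f = (\<lambda>x. p x - q x)}"

definition trop_congruence ::
  "((real^'n \<Rightarrow> ereal) \<times> (real^'n \<Rightarrow> ereal)) set \<Rightarrow> bool" where
  "trop_congruence E \<longleftrightarrow> equiv trop_rat E \<and>
     (\<forall>f g f' g'. (f, g) \<in> E \<longrightarrow> (f', g') \<in> E \<longrightarrow>
        ((\<lambda>x. max (f x) (f' x)), (\<lambda>x. max (g x) (g' x))) \<in> E \<and>
        ((\<lambda>x. f x + f' x), (\<lambda>x. g x + g' x)) \<in> E)"

definition Vset :: "((real^'n \<Rightarrow> ereal) \<times> (real^'n \<Rightarrow> ereal)) set \<Rightarrow> (real^'n) set" where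
  "Vset E = {x. \<forall>(f, g) \<in> E. f x = g x}"

definition Eset :: "(real^'n) set \<Rightarrow> ((real^'n \<Rightarrow> ereal) \<times> (real^'n \<Rightarrow> ereal)) set" where
  "Eset W = {(f, g). f \<in> trop_rat \<and> g \<in> trop_rat \<and> (\<forall>y\<in>W. f y = g y)}"

definition qcarrier :: "((real^'n \<Rightarrow> ereal) \<times> (real^'n \<Rightarrow> ereal)) set \<Rightarrow> (real^'n \<Rightarrow> ereal) set set" where
  "qcarrier E = trop_rat // E"

definition qrep :: "(real^'n \<Rightarrow> ereal) set \<Rightarrow> (real^'n \<Rightarrow> ereal)" where
  "qrep X = (SOME f. f \<in> X)"

definition qadd :: "((real^'n \<Rightarrow> ereal) \<times> (real^'n \<Rightarrow> ereal)) set \<Rightarrow>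
    (real^'n \<Rightarrow> ereal) set \<Rightarrow> (real^'n \<Rightarrow> ereal) set \<Rightarrow> (real^'n \<Rightarrow> ereal) set" where
  "qadd E X Y = E `` {\<lambda>x. max (qrep X x) (qrep Y x)}"

definition qmul :: "((real^'n \<Rightarrow> ereal) \<times> (real^'n \<Rightarrow> ereal)) set \<Rightarrow>
    (real^'n \<Rightarrow> ereal) set \<Rightarrow> (real^'n \<Rightarrow> ereal) set \<Rightarrow> (real^'n \<Rightarrow> ereal) set" where
  "qmul E X Y = E `` {\<lambda>x. qrep X x + qrep Y x}"

definition qconst :: "((real^'n \<Rightarrow> ereal) \<times> (real^'n \<Rightarrow> ereal)) set \<Rightarrow> ereal \<Rightarrow> (real^'n \<Rightarrow> ereal) set" where
  "qconst E c = E `` {\<lambda>x. c}"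

definition talg_hom ::
  "((real^'n \<Rightarrow> ereal) \<times> (real^'n \<Rightarrow> ereal)) set \<Rightarrow> ((real^'m \<Rightarrow> ereal) \<times> (real^'m \<Rightarrow> ereal)) set \<Rightarrow>
   ((real^'n \<Rightarrow> ereal) set \<Rightarrow> (real^'m \<Rightarrow> ereal) set) \<Rightarrow> bool" where
  "talg_hom E F \<psi> \<longleftrightarrow>
     (\<forall>X\<in>qcarrier E. \<psi> X \<in> qcarrier F) \<and>
     (\<forall>X\<in>qcarrier E. \<forall>Y\<in>qcarrier E.
        \<psi> (qadd E X Y) = qadd F (\<psi> X) (\<psi> Y) \<and> \<psi> (qmul E X Y) = qmul F (\<psi> X) (\<psi> Y)) \<and>
     (\<forall>c. c \<noteq> \<infinity> \<longrightarrow> \<psi> (qconst E c) = qconst F c)"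

definition qeval :: "(real^'n \<Rightarrow> ereal) set \<Rightarrow> real^'n \<Rightarrow> ereal" where
  "qeval X x = qrep X x"

end

theory Submission
  imports Defs
begin

text \<open>Fix \<open>y \<in> V(F)\<close>. Then \<open>g \<mapsto> \<psi>([g])(y)\<close> is a \<open>T\<close>-algebra homomorphism from the
  rational functions to \<open>T\<close> that is constant on \<open>E\<close>-classes. Such a character is
  evaluation at the point \<open>x\<close> with \<open>x\<^sub>j\<close> its value on \<open>X\<^sub>j\<close> (finite, since \<open>X\<^sub>j\<close>
  is invertible): it agrees with evaluation on monomials, hence on polynomials and on
  their quotients; and \<open>x \<in> V(E)\<close>. So every value of \<open>\<psi>(f)\<close> on \<open>W\<close> is a value of \<open>f\<close>
  on \<open>V\<close>, which gives both inequalities.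

  Conversely, if \<open>F = E(W)\<close> and \<open>\<psi>\<close> is injective, then \<open>\<psi>(g) \<le> \<psi>(h)\<close> on \<open>W\<close> means
  \<open>\<psi>(g \<oplus> h) = \<psi>(h)\<close>, hence \<open>g \<oplus> h = h\<close> modulo \<open>E\<close>, i.e. \<open>g \<le> h\<close> on \<open>V\<close>. Taking
  for \<open>h\<close> the constant \<open>sup\<^sub>W \<psi>(f)\<close>, resp. for \<open>g\<close> the constant \<open>inf\<^sub>W \<psi>(f)\<close>
  (finite as \<open>W \<noteq> {}\<close>), gives the reverse inequalities.\<close>

section \<open>Quotients by a tropical congruence\<close>

context
  fixes E :: "((real^'n \<Rightarrow> ereal) \<times> (real^'n \<Rightarrow> ereal)) set"
  assumes congruence: "trop_congruence E"
begin

lemma trop_congruence_equiv: "equiv trop_rat E"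
  using congruence by (simp add: trop_congruence_def)

lemma trop_congruence_max:
  "(f, g) \<in> E \<Longrightarrow> (f', g') \<in> E \<Longrightarrow> ((\<lambda>x. max (f x) (f' x)), (\<lambda>x. max (g x) (g' x))) \<in> E"
  using congruence by (simp add: trop_congruence_def)

lemma trop_congruence_add:
  "(f, g) \<in> E \<Longrightarrow> (f', g') \<in> E \<Longrightarrow> ((\<lambda>x. f x + f' x), (\<lambda>x. g x + g' x)) \<in> E"
  using congruence by (simp add: trop_congruence_def)

lemma trop_congruence_refl: "g \<in> trop_rat \<Longrightarrow> (g, g) \<in> E"
  using trop_congruence_equiv by (auto simp: equiv_def refl_on_def)

lemma trop_congruence_sym: "(g, h) \<in> E \<Longrightarrow> (h, g) \<in> E"
  using trop_congruence_equiv by (auto simp: equiv_def sym_def)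

lemma trop_congruence_in_trop_rat: "(g, h) \<in> E \<Longrightarrow> g \<in> trop_rat \<and> h \<in> trop_rat"
  using trop_congruence_equiv equiv_type by blast

text \<open>A congruence is reflexive on \<open>trop_rat\<close> and compatible with the operations, so its mere
  existence shows that \<open>trop_rat\<close> is closed under them.\<close>

lemma trop_rat_max:
  fixes g h :: "real^'n \<Rightarrow> ereal"
  assumes "g \<in> trop_rat" and "h \<in> trop_rat"
  shows "(\<lambda>x. max (g x) (h x)) \<in> trop_rat"
proof -
  have "((\<lambda>x. max (g x) (h x)), (\<lambda>x. max (g x) (h x))) \<in> E"
    using assms by (intro trop_congruence_max trop_congruence_refl)
  then show ?thesis using trop_congruence_in_trop_rat by blast
qed

lemma trop_rat_add:
  fixes g h :: "real^'n \<Rightarrow> ereal"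
  assumes "g \<in> trop_rat" and "h \<in> trop_rat"
  shows "(\<lambda>x. g x + h x) \<in> trop_rat"
proof -
  have "((\<lambda>x. g x + h x), (\<lambda>x. g x + h x)) \<in> E"
    using assms by (intro trop_congruence_add trop_congruence_refl)
  then show ?thesis using trop_congruence_in_trop_rat by blast
qed

lemma qrep_class: "g \<in> trop_rat \<Longrightarrow> (g, qrep (E``{g})) \<in> E"
proof -
  assume "g \<in> trop_rat"
  then have "g \<in> E``{g}" using trop_congruence_refl by simp
  then show ?thesis unfolding qrep_def by (metis someI Image_singleton_iff)
qed

lemma qcarrier_eq_class: "X \<in> qcarrier E \<Longrightarrow> qrep X \<in> trop_rat \<and> X = E``{qrep X}"
  unfolding qcarrier_def
  by (metis qrep_class equiv_class_eq[OF trop_congruence_equiv] trop_congruence_in_trop_rat quotientE)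

lemma class_in_qcarrier: "g \<in> trop_rat \<Longrightarrow> E``{g} \<in> qcarrier E"
  unfolding qcarrier_def by (rule quotientI)

lemma qadd_class:
  assumes "g \<in> trop_rat" and "h \<in> trop_rat"
  shows "qadd E (E``{g}) (E``{h}) = E``{\<lambda>x. max (g x) (h x)}"
proof -
  have "((\<lambda>x. max (qrep (E``{g}) x) (qrep (E``{h}) x)), (\<lambda>x. max (g x) (h x))) \<in> E"
    using assms by (intro trop_congruence_max) (auto intro: qrep_class trop_congruence_sym)
  then show ?thesis
    unfolding qadd_def by (rule equiv_class_eq[OF trop_congruence_equiv])
qed

lemma qmul_class:
  assumes "g \<in> trop_rat" and "h \<in> trop_rat"
  shows "qmul E (E``{g}) (E``{h}) = E``{\<lambda>x. g x + h x}"
proof -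
  have "((\<lambda>x. qrep (E``{g}) x + qrep (E``{h}) x), (\<lambda>x. g x + h x)) \<in> E"
    using assms by (intro trop_congruence_add) (auto intro: qrep_class trop_congruence_sym)
  then show ?thesis
    unfolding qmul_def by (rule equiv_class_eq[OF trop_congruence_equiv])
qed

lemma qeval_class: "g \<in> trop_rat \<Longrightarrow> x \<in> Vset E \<Longrightarrow> qeval (E``{g}) x = g x"
  using qrep_class unfolding qeval_def Vset_def by fastforce

end

section \<open>Tropical polynomials and rational functions\<close>

definition trop_monomial :: "real \<Rightarrow> ('n \<Rightarrow> nat) \<Rightarrow> real^'n \<Rightarrow> ereal" where
  "trop_monomial c a x = ereal (c + (\<Sum>i\<in>UNIV. real (a i) * x $ i))"

definition trop_poly_of :: "(real \<times> ('n \<Rightarrow> nat)) set \<Rightarrow> real^'n \<Rightarrow> ereal" where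
  "trop_poly_of S x = (SUP ca\<in>S. trop_monomial (fst ca) (snd ca) x)"

lemma trop_poly_iff: "p \<in> trop_poly \<longleftrightarrow> (\<exists>S. finite S \<and> p = trop_poly_of S)"
  unfolding trop_poly_def trop_poly_of_def trop_monomial_def by (auto simp: fun_eq_iff)

lemma trop_poly_of_empty: "trop_poly_of {} = (\<lambda>x. -\<infinity>)"
  by (simp add: trop_poly_of_def fun_eq_iff bot_ereal_def)

lemma trop_poly_of_insert:
  "trop_poly_of (insert ca S) = (\<lambda>x. max (trop_monomial (fst ca) (snd ca) x) (trop_poly_of S x))"
  by (simp add: trop_poly_of_def fun_eq_iff sup_max)

lemma trop_poly_of_real:
  assumes "finite S" and "S \<noteq> {}"
  shows "\<exists>r. trop_poly_of S x = ereal r"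
proof -
  have "trop_poly_of S x = Max ((\<lambda>ca. trop_monomial (fst ca) (snd ca) x) ` S)"
    using assms by (simp add: trop_poly_of_def Max_Sup)
  also have "\<dots> \<in> (\<lambda>ca. trop_monomial (fst ca) (snd ca) x) ` S"
    using assms by (intro Max_in) auto
  finally show ?thesis by (auto simp: trop_monomial_def)
qed

lemma trop_monomial_in_trop_poly: "trop_monomial c a \<in> trop_poly"
proof -
  have "trop_monomial c a = trop_poly_of {(c, a)}"
    by (simp add: trop_poly_of_def fun_eq_iff)
  then show ?thesis unfolding trop_poly_iff by blast
qed

lemma trop_poly_zero: "(\<lambda>_. 0) \<in> trop_poly"
proof -
  have "(\<lambda>_. 0) = trop_monomial 0 (\<lambda>_. 0)"
    by (simp add: trop_monomial_def fun_eq_iff zero_ereal_def)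
  then show ?thesis using trop_monomial_in_trop_poly by metis
qed

lemma trop_poly_coord: "(\<lambda>x. ereal (x $ j)) \<in> trop_poly"
proof -
  have "(\<lambda>x. ereal (x $ j)) = trop_monomial 0 (\<lambda>i. if i = j then 1 else 0)"
    by (simp add: trop_monomial_def fun_eq_iff if_distrib if_distribR cong: if_cong)
  then show ?thesis using trop_monomial_in_trop_poly by metis
qed

lemma trop_rat_quotient:
  assumes "p \<in> trop_poly" and "q \<in> trop_poly" and "\<And>x. q x = ereal (r x)"
  shows "(\<lambda>x. p x - q x) \<in> trop_rat"
proof -
  have "q \<noteq> (\<lambda>_. -\<infinity>)"
    using assms(3) by (auto simp: fun_eq_iff)
  then show ?thesis
    unfolding trop_rat_def using assms(1,2) by blast
qed

lemma trop_poly_in_trop_rat: "p \<in> trop_poly \<Longrightarrow> p \<in> trop_rat"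
  using trop_rat_quotient[OF _ trop_poly_zero, of p "\<lambda>_. 0"] by (simp add: zero_ereal_def)

lemma trop_rat_const: "c \<noteq> \<infinity> \<Longrightarrow> (\<lambda>_::real^'n. c) \<in> trop_rat"
proof (cases c)
  case (real r)
  then have "(\<lambda>_::real^'n. c) = trop_monomial r (\<lambda>_. 0)"
    by (simp add: trop_monomial_def fun_eq_iff)
  then show ?thesis using trop_monomial_in_trop_poly trop_poly_in_trop_rat by metis
next
  case MInf
  then have "(\<lambda>_::real^'n. c) = trop_poly_of {}"
    by (simp add: trop_poly_of_empty)
  then show ?thesis using trop_poly_iff trop_poly_in_trop_rat by blast
qed simp

lemma trop_rat_poly_of: "finite S \<Longrightarrow> trop_poly_of S \<in> trop_rat"
  using trop_poly_iff trop_poly_in_trop_rat by blast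

lemma trop_rat_coord: "(\<lambda>x::real^'n. ereal (x $ j)) \<in> trop_rat"
  using trop_poly_coord trop_poly_in_trop_rat by blast

lemma trop_rat_neg_coord: "(\<lambda>x::real^'n. ereal (- x $ j)) \<in> trop_rat"
  using trop_rat_quotient[OF trop_poly_zero trop_poly_coord[of j], of "\<lambda>x. x $ j"] by simp

lemma trop_rat_decompose:
  assumes "f \<in> trop_rat"
  obtains S T where "finite S" "finite T" "T \<noteq> {}"
    and "f = (\<lambda>x. trop_poly_of S x - trop_poly_of T x)"
proof -
  obtain p q where p: "p \<in> trop_poly" and q: "q \<in> trop_poly" "q \<noteq> (\<lambda>_. -\<infinity>)"
    and f: "f = (\<lambda>x. p x - q x)"
    using assms unfolding trop_rat_def by blast
  obtain S where "finite S" "p = trop_poly_of S"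
    using p unfolding trop_poly_iff by blast
  moreover obtain T where "finite T" "q = trop_poly_of T"
    using q(1) unfolding trop_poly_iff by blast
  moreover have "T \<noteq> {}"
    using q(2) calculation by (auto simp: trop_poly_of_empty)
  ultimately show ?thesis
    using f that by blast
qed

lemma trop_rat_neq_infty: "f \<in> trop_rat \<Longrightarrow> f x \<noteq> \<infinity>"
proof (erule trop_rat_decompose)
  fix S T
  assume S: "finite S" and T: "finite T" "T \<noteq> {}"
    and f: "f = (\<lambda>x. trop_poly_of S x - trop_poly_of T x)"
  obtain r where r: "trop_poly_of T x = ereal r"
    using trop_poly_of_real[OF T] by blast
  have "trop_poly_of S x \<noteq> \<infinity>"
    using S trop_poly_of_real[of S x] by (cases "S = {}") (auto simp: trop_poly_of_empty)
  then show "f x \<noteq> \<infinity>"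
    unfolding f r by (cases "trop_poly_of S x") auto
qed

section \<open>Characters of a quotient are points of its variety\<close>

locale trop_character =
  fixes E :: "((real^'n \<Rightarrow> ereal) \<times> (real^'n \<Rightarrow> ereal)) set"
    and \<Phi> :: "(real^'n \<Rightarrow> ereal) \<Rightarrow> ereal"
  assumes congruence: "trop_congruence E"
    and respects: "(g, h) \<in> E \<Longrightarrow> \<Phi> g = \<Phi> h"
    and preserves_max:
      "g \<in> trop_rat \<Longrightarrow> h \<in> trop_rat \<Longrightarrow> \<Phi> (\<lambda>x. max (g x) (h x)) = max (\<Phi> g) (\<Phi> h)"
    and preserves_add: "g \<in> trop_rat \<Longrightarrow> h \<in> trop_rat \<Longrightarrow> \<Phi> (\<lambda>x. g x + h x) = \<Phi> g + \<Phi> h"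
    and preserves_const: "c \<noteq> \<infinity> \<Longrightarrow> \<Phi> (\<lambda>_. c) = c"
begin

lemma preserves_sum:
  assumes "finite A" and "\<And>i. i \<in> A \<Longrightarrow> f i \<in> trop_rat"
  shows "(\<lambda>x. \<Sum>i\<in>A. f i x) \<in> trop_rat \<and> \<Phi> (\<lambda>x. \<Sum>i\<in>A. f i x) = (\<Sum>i\<in>A. \<Phi> (f i))"
  using assms
proof (induction A rule: finite_induct)
  case empty
  show ?case using trop_rat_const[of 0] preserves_const[of 0] by simp
next
  case (insert j A)
  then have "f j \<in> trop_rat" and "(\<lambda>x. \<Sum>i\<in>A. f i x) \<in> trop_rat"
    and "\<Phi> (\<lambda>x. \<Sum>i\<in>A. f i x) = (\<Sum>i\<in>A. \<Phi> (f i))"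
    by auto
  then show ?case
    using insert.hyps trop_rat_add[OF congruence] preserves_add by simp
qed

definition point :: "real^'n" where
  "point = (\<chi> j. real_of_ereal (\<Phi> (\<lambda>x. ereal (x $ j))))"

lemma preserves_coord: "\<Phi> (\<lambda>x. ereal (x $ j)) = ereal (point $ j)"
proof -
  have "\<Phi> (\<lambda>x. ereal (x $ j)) + \<Phi> (\<lambda>x. ereal (- x $ j)) = \<Phi> (\<lambda>x. ereal (x $ j) + ereal (- x $ j))"
    using preserves_add[OF trop_rat_coord[of j] trop_rat_neg_coord[of j]] by simp
  also have "\<dots> = 0"
    using preserves_const[of 0] by (simp add: zero_ereal_def)
  finally have "\<bar>\<Phi> (\<lambda>x. ereal (x $ j))\<bar> \<noteq> \<infinity>"
    by (cases "\<Phi> (\<lambda>x. ereal (x $ j))"; cases "\<Phi> (\<lambda>x. ereal (- x $ j))") auto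
  then show ?thesis
    by (simp add: point_def ereal_real')
qed

lemma preserves_monomial: "\<Phi> (trop_monomial c a) = trop_monomial c a point"
proof -
  have expand: "trop_monomial c a = (\<lambda>x. ereal c + (\<Sum>i\<in>UNIV. \<Sum>k<a i. ereal (x $ i)))"
    by (simp add: trop_monomial_def fun_eq_iff)
  have inner: "(\<lambda>x. \<Sum>k<a i. ereal (x $ i)) \<in> trop_rat \<and>
      \<Phi> (\<lambda>x. \<Sum>k<a i. ereal (x $ i)) = (\<Sum>k<a i. ereal (point $ i))" for i
    using preserves_sum[of "{..<a i}" "\<lambda>_ x. ereal (x $ i)"]
    by (simp add: trop_rat_coord preserves_coord)
  have outer: "(\<lambda>x. \<Sum>i\<in>UNIV. \<Sum>k<a i. ereal (x $ i)) \<in> trop_rat \<and>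
      \<Phi> (\<lambda>x. \<Sum>i\<in>UNIV. \<Sum>k<a i. ereal (x $ i)) = (\<Sum>i\<in>UNIV. \<Sum>k<a i. ereal (point $ i))"
    using preserves_sum[of UNIV "\<lambda>i x. \<Sum>k<a i. ereal (x $ i)"] inner by simp
  show ?thesis
    unfolding expand
    using preserves_add[OF trop_rat_const[of "ereal c"] conjunct1[OF outer]]
      preserves_const[of "ereal c"] outer
    by simp
qed

lemma preserves_poly: "finite S \<Longrightarrow> \<Phi> (trop_poly_of S) = trop_poly_of S point"
proof (induction S rule: finite_induct)
  case empty
  show ?case using preserves_const[of "-\<infinity>"] by (simp add: trop_poly_of_empty)
next
  case (insert ca S)
  then show ?case
    using preserves_max[OF trop_poly_in_trop_rat[OF trop_monomial_in_trop_poly] trop_rat_poly_of]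
      preserves_monomial
    by (simp add: trop_poly_of_insert)
qed

lemma eq_eval:
  assumes "f \<in> trop_rat"
  shows "\<Phi> f = f point"
  using assms
proof (rule trop_rat_decompose)
  fix S T
  assume S: "finite S" and T: "finite T" "T \<noteq> {}"
    and f: "f = (\<lambda>x. trop_poly_of S x - trop_poly_of T x)"
  have T_real: "\<exists>r. trop_poly_of T x = ereal r" for x
    using trop_poly_of_real[OF T] .
  have "(\<lambda>x. f x + trop_poly_of T x) = trop_poly_of S"
  proof
    fix x
    obtain r where "trop_poly_of T x = ereal r" using T_real by blast
    then show "f x + trop_poly_of T x = trop_poly_of S x"
      unfolding f by (cases "trop_poly_of S x") auto
  qed
  then have "\<Phi> f + \<Phi> (trop_poly_of T) = \<Phi> (trop_poly_of S)"
    using preserves_add[OF assms trop_rat_poly_of[OF T(1)]] by simp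
  moreover obtain r where r: "trop_poly_of T point = ereal r"
    using T_real by blast
  ultimately have "\<Phi> f + ereal r = trop_poly_of S point"
    using preserves_poly S T(1) by simp
  moreover have "f point = trop_poly_of S point - ereal r"
    using f r by simp
  ultimately show "\<Phi> f = f point"
    by (cases "\<Phi> f"; cases "trop_poly_of S point") auto
qed

lemma point_in_Vset: "point \<in> Vset E"
proof -
  have "g point = h point" if "(g, h) \<in> E" for g h
    using respects[OF that] eq_eval trop_congruence_in_trop_rat[OF congruence that] by simp
  then show ?thesis
    unfolding Vset_def by blast
qed

end

section \<open>Homomorphisms between quotients\<close>

locale trop_quotient_hom =
  fixes E :: "((real^'n \<Rightarrow> ereal) \<times> (real^'n \<Rightarrow> ereal)) set"
    and F :: "((real^'m \<Rightarrow> ereal) \<times> (real^'m \<Rightarrow> ereal)) set"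
    and \<psi> :: "(real^'n \<Rightarrow> ereal) set \<Rightarrow> (real^'m \<Rightarrow> ereal) set"
  assumes congruence_E: "trop_congruence E"
    and congruence_F: "trop_congruence F"
    and hom: "talg_hom E F \<psi>"
begin

lemma image_class:
  assumes "g \<in> trop_rat"
  shows "qrep (\<psi> (E``{g})) \<in> trop_rat" and "\<psi> (E``{g}) = F``{qrep (\<psi> (E``{g}))}"
  using hom class_in_qcarrier[OF congruence_E assms] qcarrier_eq_class[OF congruence_F]
  unfolding talg_hom_def by blast+

lemma qeval_image_max:
  assumes g: "g \<in> trop_rat" and h: "h \<in> trop_rat" and y: "y \<in> Vset F"
  shows "qeval (\<psi> (E``{\<lambda>x. max (g x) (h x)})) y =
    max (qeval (\<psi> (E``{g})) y) (qeval (\<psi> (E``{h})) y)"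
proof -
  define u v where "u = qrep (\<psi> (E``{g}))" and "v = qrep (\<psi> (E``{h}))"
  have u: "u \<in> trop_rat" "\<psi> (E``{g}) = F``{u}" and v: "v \<in> trop_rat" "\<psi> (E``{h}) = F``{v}"
    using image_class[OF g] image_class[OF h] unfolding u_def v_def by auto
  have "\<psi> (E``{\<lambda>x. max (g x) (h x)}) = \<psi> (qadd E (E``{g}) (E``{h}))"
    using qadd_class[OF congruence_E g h] by simp
  also have "\<dots> = qadd F (\<psi> (E``{g})) (\<psi> (E``{h}))"
    using hom class_in_qcarrier[OF congruence_E] g h unfolding talg_hom_def by blast
  also have "\<dots> = F``{\<lambda>x. max (u x) (v x)}"
    unfolding u(2) v(2) using qadd_class[OF congruence_F u(1) v(1)] .
  finally show ?thesis
    using qeval_class[OF congruence_F trop_rat_max[OF congruence_F u(1) v(1)] y]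
    by (simp add: qeval_def u_def v_def)
qed

lemma qeval_image_add:
  assumes g: "g \<in> trop_rat" and h: "h \<in> trop_rat" and y: "y \<in> Vset F"
  shows "qeval (\<psi> (E``{\<lambda>x. g x + h x})) y = qeval (\<psi> (E``{g})) y + qeval (\<psi> (E``{h})) y"
proof -
  define u v where "u = qrep (\<psi> (E``{g}))" and "v = qrep (\<psi> (E``{h}))"
  have u: "u \<in> trop_rat" "\<psi> (E``{g}) = F``{u}" and v: "v \<in> trop_rat" "\<psi> (E``{h}) = F``{v}"
    using image_class[OF g] image_class[OF h] unfolding u_def v_def by auto
  have "\<psi> (E``{\<lambda>x. g x + h x}) = \<psi> (qmul E (E``{g}) (E``{h}))"
    using qmul_class[OF congruence_E g h] by simp
  also have "\<dots> = qmul F (\<psi> (E``{g})) (\<psi> (E``{h}))"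
    using hom class_in_qcarrier[OF congruence_E] g h unfolding talg_hom_def by blast
  also have "\<dots> = F``{\<lambda>x. u x + v x}"
    unfolding u(2) v(2) using qmul_class[OF congruence_F u(1) v(1)] .
  finally show ?thesis
    using qeval_class[OF congruence_F trop_rat_add[OF congruence_F u(1) v(1)] y]
    by (simp add: qeval_def u_def v_def)
qed

lemma qeval_image_const:
  assumes "c \<noteq> \<infinity>" and "y \<in> Vset F"
  shows "qeval (\<psi> (E``{\<lambda>_. c})) y = c"
proof -
  have "\<psi> (E``{\<lambda>_. c}) = F``{\<lambda>_. c}"
    using hom assms(1) unfolding talg_hom_def qconst_def by blast
  then show ?thesis
    using qeval_class[OF congruence_F trop_rat_const[OF assms(1)] assms(2)] by simp
qed

lemma trop_character_at: "y \<in> Vset F \<Longrightarrow> trop_character E (\<lambda>g. qeval (\<psi> (E``{g})) y)"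
  by unfold_locales
    (auto simp: congruence_E qeval_image_max qeval_image_add qeval_image_const
      equiv_class_eq[OF trop_congruence_equiv[OF congruence_E]])

lemma pullback_point:
  assumes "y \<in> Vset F"
  shows "\<exists>x\<in>Vset E. \<forall>f\<in>qcarrier E. qeval (\<psi> f) y = qeval f x"
proof -
  interpret character: trop_character E "\<lambda>g. qeval (\<psi> (E``{g})) y"
    using trop_character_at[OF assms] .
  have "qeval (\<psi> f) y = qeval f character.point" if "f \<in> qcarrier E" for f
  proof -
    have "qrep f \<in> trop_rat" and "f = E``{qrep f}"
      using qcarrier_eq_class[OF congruence_E that] by auto
    then show ?thesis
      using character.eq_eval[of "qrep f"] by (simp add: qeval_def)
  qed
  then show ?thesis
    using character.point_in_Vset by blast
qed

lemma SUP_image_le: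
  assumes "f \<in> qcarrier E"
  shows "(SUP y\<in>Vset F. qeval (\<psi> f) y) \<le> (SUP x\<in>Vset E. qeval f x)"
proof (rule SUP_mono)
  fix y assume "y \<in> Vset F"
  then obtain x where "x \<in> Vset E" "qeval (\<psi> f) y = qeval f x"
    using pullback_point assms by blast
  then show "\<exists>x\<in>Vset E. qeval (\<psi> f) y \<le> qeval f x"
    by auto
qed

lemma INF_le_image:
  assumes "f \<in> qcarrier E"
  shows "(INF x\<in>Vset E. qeval f x) \<le> (INF y\<in>Vset F. qeval (\<psi> f) y)"
proof (rule INF_mono)
  fix y assume "y \<in> Vset F"
  then obtain x where "x \<in> Vset E" "qeval (\<psi> f) y = qeval f x"
    using pullback_point assms by blast
  then show "\<exists>x\<in>Vset E. qeval f x \<le> qeval (\<psi> f) y"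
    by auto
qed

context
  assumes inj: "inj_on \<psi> (qcarrier E)"
    and F_eq_Eset: "F = Eset (Vset F)"
begin

lemma reflects_le:
  assumes g: "g \<in> trop_rat" and h: "h \<in> trop_rat"
    and le: "\<And>y. y \<in> Vset F \<Longrightarrow> qeval (\<psi> (E``{g})) y \<le> qeval (\<psi> (E``{h})) y"
    and x: "x \<in> Vset E"
  shows "g x \<le> h x"
proof -
  define m where "m = (\<lambda>x. max (g x) (h x))"
  have m: "m \<in> trop_rat"
    unfolding m_def using trop_rat_max[OF congruence_E g h] .
  have "qeval (\<psi> (E``{m})) y = qeval (\<psi> (E``{h})) y" if "y \<in> Vset F" for y
    unfolding m_def using qeval_image_max[OF g h that] le[OF that] by simp
  then have "(qrep (\<psi> (E``{m})), qrep (\<psi> (E``{h}))) \<in> Eset (Vset F)"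
    using image_class(1)[OF m] image_class(1)[OF h] by (simp add: Eset_def qeval_def)
  then have "(qrep (\<psi> (E``{m})), qrep (\<psi> (E``{h}))) \<in> F"
    using F_eq_Eset by simp
  then have "\<psi> (E``{m}) = \<psi> (E``{h})"
    using image_class(2)[OF m] image_class(2)[OF h]
      equiv_class_eq[OF trop_congruence_equiv[OF congruence_F]] by metis
  then have "E``{m} = E``{h}"
    using inj class_in_qcarrier[OF congruence_E] m h by (meson inj_onD)
  then have "(m, h) \<in> E"
    using eq_equiv_class_iff[OF trop_congruence_equiv[OF congruence_E] m h] by blast
  then have "m x = h x"
    using x unfolding Vset_def by blast
  then show ?thesis
    unfolding m_def by (metis max.cobounded1)
qed

lemma SUP_eq_image:
  assumes f: "f \<in> qcarrier E"
  shows "(SUP x\<in>Vset E. qeval f x) = (SUP y\<in>Vset F. qeval (\<psi> f) y)"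
proof (rule antisym[OF _ SUP_image_le[OF f]])
  define c where "c = (SUP y\<in>Vset F. qeval (\<psi> f) y)"
  have g: "qrep f \<in> trop_rat" and f_class: "f = E``{qrep f}"
    using qcarrier_eq_class[OF congruence_E f] by auto
  show "(SUP x\<in>Vset E. qeval f x) \<le> c"
  proof (cases "c = \<infinity>")
    case False
    have "qeval f x \<le> c" if "x \<in> Vset E" for x
    proof -
      have "qeval (\<psi> (E``{qrep f})) y \<le> qeval (\<psi> (E``{\<lambda>_. c})) y" if "y \<in> Vset F" for y
        using qeval_image_const[OF False that] f_class SUP_upper[OF that, of "\<lambda>y. qeval (\<psi> f) y"]
        by (simp add: c_def)
      then show ?thesis
        using reflects_le[OF g trop_rat_const[OF False] _ that] by (simp add: qeval_def)
    qed
    then show ?thesis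
      by (rule SUP_least)
  qed simp
qed

lemma INF_eq_image:
  assumes f: "f \<in> qcarrier E" and nonempty: "Vset F \<noteq> {}"
  shows "(INF x\<in>Vset E. qeval f x) = (INF y\<in>Vset F. qeval (\<psi> f) y)"
proof (rule antisym[OF INF_le_image[OF f]])
  define c where "c = (INF y\<in>Vset F. qeval (\<psi> f) y)"
  have g: "qrep f \<in> trop_rat" and f_class: "f = E``{qrep f}"
    using qcarrier_eq_class[OF congruence_E f] by auto
  obtain y0 where y0: "y0 \<in> Vset F"
    using nonempty by blast
  have "c \<le> qeval (\<psi> f) y0"
    unfolding c_def using y0 by (rule INF_lower)
  moreover have "qeval (\<psi> f) y0 \<noteq> \<infinity>"
    using image_class(1)[OF g] f_class trop_rat_neq_infty by (metis qeval_def)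
  ultimately have finite_c: "c \<noteq> \<infinity>"
    by auto
  have "c \<le> qeval f x" if "x \<in> Vset E" for x
  proof -
    have "qeval (\<psi> (E``{\<lambda>_. c})) y \<le> qeval (\<psi> (E``{qrep f})) y" if "y \<in> Vset F" for y
      using qeval_image_const[OF finite_c that] f_class INF_lower[OF that, of "\<lambda>y. qeval (\<psi> f) y"]
      by (simp add: c_def)
    then show ?thesis
      using reflects_le[OF trop_rat_const[OF finite_c] g _ that] by (simp add: qeval_def)
  qed
  then show "c \<le> (INF x\<in>Vset E. qeval f x)"
    by (rule INF_greatest)
qed

end

end

theorem corollary3p17:
  fixes E :: "((real^'n \<Rightarrow> ereal) \<times> (real^'n \<Rightarrow> ereal)) set"
    and F :: "((real^'m \<Rightarrow> ereal) \<times> (real^'m \<Rightarrow> ereal)) set"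
    and \<psi> :: "(real^'n \<Rightarrow> ereal) set \<Rightarrow> (real^'m \<Rightarrow> ereal) set"
  assumes "trop_congruence E" and "trop_congruence F" and "talg_hom E F \<psi>"
  shows "(\<forall>f\<in>qcarrier E.
           (SUP x\<in>Vset E. qeval f x) \<ge> (SUP y\<in>Vset F. qeval (\<psi> f) y) \<and>
           (INF x\<in>Vset E. qeval f x) \<le> (INF y\<in>Vset F. qeval (\<psi> f) y)) \<and>
         (Vset F \<noteq> {} \<and> inj_on \<psi> (qcarrier E) \<and> F = Eset (Vset F) \<longrightarrow>
         (\<forall>f\<in>qcarrier E.
           (SUP x\<in>Vset E. qeval f x) = (SUP y\<in>Vset F. qeval (\<psi> f) y) \<and>
           (INF x\<in>Vset E. qeval f x) = (INF y\<in>Vset F. qeval (\<psi> f) y)))"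
proof -
  interpret trop_quotient_hom E F \<psi>
    using assms by unfold_locales
  show ?thesis
    using SUP_image_le INF_le_image SUP_eq_image INF_eq_image by blast
qed

end
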